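(* Let $n,k\ge0$ be integers and assume the numbers $\alpha_i+im$, $i=0,\ldots,k$, are pairwise distinct. Then $$L_{m,\bar{\alpha}}(n,k)=\sum_{j=0}^{k}\frac{\prod_{i=0}^{n-1}(\alpha_j+jm+\alpha_i+im)}{\prod_{i=0,\,i\ne j}^{k}(\alpha_j+jm-\alpha_i-im)}.$$ Moreover, for all integers $n\ge k\ge1$, $$L_{m,\bar{\alpha}}(n,k)=\sum_{j=k}^{n}L_{m,\bar{\alpha}}(j-1,k-1)\prod_{i=j}^{n-1}(\alpha_i+im+\alpha_k+km).$$
   Context: Fix a real number $m$ and a sequence $\bar{\alpha}=(\alpha_0,\alpha_1,\ldots)$ of real numbers. Let $(x;\bar{\alpha}|m)_n=\prod_{j=0}^{n-1}(x-\alpha_j-jm)$, with $(x;\bar{\alpha}|m)_0=1$. The $\bar{\alpha}$-Whitney numbers of the first kind $w_{m,\bar{\alpha}}(n,k)$ and second kind $W_{m,\bar{\alpha}}(n,k)$ are defined by the polynomial identities $(x;\bar{\alpha}|m)_n=\sum_{k=0}^n w_{m,\bar{\alpha}}(n,k)x^k$ and $x^n=\sum_{k=0}^n W_{m,\bar{\alpha}}(n,k)(x;\bar{\alpha}|m)_k$, both vanishing for $k>n$ or $k<0$. The $\bar{\alpha}$-Whitney-Lah numbers are $$L_{m,\bar{\alpha}}(n,k)=\sum_{j=k}^{n}(-1)^{n-j}\,w_{m,\bar{\alpha}}(n,j)\,W_{m,\bar{\alpha}}(j,k),$$ with $L_{m,\bar{\alpha}}(0,0)=1$ and $L_{m,\bar{\alpha}}(n,k)=0$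 for $n<k$ or $k<0$. Empty products equal $1$. *)

theory Defs
  imports "HOL-Computational_Algebra.Polynomial"
begin

definition gfall :: "real \<Rightarrow> (nat \<Rightarrow> real) \<Rightarrow> nat \<Rightarrow> real poly" where
  "gfall m \<alpha> n = (\<Prod>j<n. [:- (\<alpha> j + real j * m), 1:])"

definition wf :: "real \<Rightarrow> (nat \<Rightarrow> real) \<Rightarrow> nat \<Rightarrow> nat \<Rightarrow> real" where
  "wf m \<alpha> n k = coeff (gfall m \<alpha> n) k"

definition Wf :: "real \<Rightarrow> (nat \<Rightarrow> real) \<Rightarrow> nat \<Rightarrow> nat \<Rightarrow> real" where
  "Wf m \<alpha> n = (THE c. (\<forall>k>n. c k = 0) \<and>
      monom 1 n = (\<Sum>k\<le>n. smult (c k) (gfall m \<alpha> k)))"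

text \<open>Whitney-Lah numbers (for n < k the sum is empty, giving 0; L(0,0)=1).\<close>
definition Lah :: "real \<Rightarrow> (nat \<Rightarrow> real) \<Rightarrow> nat \<Rightarrow> nat \<Rightarrow> real" where
  "Lah m \<alpha> n k = (\<Sum>j=k..n. (-1) ^ (n - j) * wf m \<alpha> n j * Wf m \<alpha> j k)"

end

theory Submission
  imports Defs
begin

text \<open>Write \<open>a\<^sub>i = \<alpha>\<^sub>i + i m\<close> for the nodes, so that \<open>(x;\<alpha>|m)\<^sub>n = \<Prod>\<^sub>i\<^sub><\<^sub>n (x - a\<^sub>i)\<close>.
  These Newton polynomials form a basis, and the identities \<open>w\<close>/\<open>W\<close> show that
  \<open>L(n,k)\<close> are the Newton coordinates of the rising product \<open>\<Prod>\<^sub>i\<^sub><\<^sub>n (x + a\<^sub>i)\<close>.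
  Multiplying by \<open>x + a\<^sub>n = (x - a\<^sub>k) + (a\<^sub>n + a\<^sub>k)\<close> gives the recurrence
  \<open>L(n+1,k) = L(n,k-1) + (a\<^sub>n + a\<^sub>k) L(n,k)\<close>, whose unrolling is the second formula.
  For the first, truncating the Newton expansion after degree \<open>k\<close> does not change its
  values at \<open>a\<^sub>0, \<dots>, a\<^sub>k\<close>; so \<open>L(n,k)\<close> is the top coefficient of the interpolation
  polynomial of the rising product at these nodes, which Lagrange's formula computes.\<close>

section \<open>Top coefficient of an interpolation polynomial\<close>

lemma degree_prod_monic_linear:
  fixes b :: "'a \<Rightarrow> 'b::idom"
  shows "degree (\<Prod>i\<in>A. [:- b i, 1:]) = card A"
proof (cases "finite A")
  case True
  then show ?thesis by (subst degree_prod_eq_sum_degree) auto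
qed simp

lemma coeff_prod_monic_linear:
  fixes b :: "'a \<Rightarrow> 'b::idom"
  shows "coeff (\<Prod>i\<in>A. [:- b i, 1:]) (card A) = 1"
  using lead_coeff_prod[of "\<lambda>i. [:- b i, 1:]" A] by (simp add: degree_prod_monic_linear)

lemma coeff_top_eq_Lagrange_sum:
  fixes q :: "'a::field poly" and x :: "'b \<Rightarrow> 'a"
  assumes "finite I" "inj_on x I" "degree q < card I"
  shows "coeff q (card I - 1) = (\<Sum>i\<in>I. poly q (x i) / (\<Prod>j\<in>I - {i}. x i - x j))"
proof -
  define D where "D i = (\<Prod>j\<in>I - {i}. x i - x j)" for i
  define Lg where "Lg = (\<Sum>i\<in>I. smult (poly q (x i) / D i) (\<Prod>j\<in>I - {i}. [:- x j, 1:]))"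
  have card_minus: "card (I - {i}) = card I - 1" if "i \<in> I" for i
    using assms(1) that by simp
  have D_nonzero: "D i \<noteq> 0" if "i \<in> I" for i
    unfolding D_def using assms(1,2) that by (auto simp: inj_on_def)
  have poly_Lg: "poly Lg (x t) = poly q (x t)" if t: "t \<in> I" for t
  proof -
    have "poly Lg (x t) = (\<Sum>i\<in>I. if i = t then poly q (x t) else 0)"
      unfolding Lg_def poly_sum
    proof (rule sum.cong[OF refl])
      fix i assume "i \<in> I"
      show "poly (smult (poly q (x i) / D i) (\<Prod>j\<in>I - {i}. [:- x j, 1:])) (x t)
          = (if i = t then poly q (x t) else 0)"
      proof (cases "i = t")
        case True
        then show ?thesis using D_nonzero[OF t] by (simp add: poly_prod D_def)
      next
        case False
        then have "(\<Prod>j\<in>I - {i}. poly [:- x j, 1:] (x t)) = 0"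
          using assms(1) t by (intro prod_zero) (auto intro!: bexI[of _ t])
        with False show ?thesis by (simp add: poly_prod)
      qed
    qed
    also have "\<dots> = poly q (x t)" using assms(1) t by simp
    finally show ?thesis .
  qed
  have "degree Lg \<le> card I - 1"
    unfolding Lg_def
    by (intro degree_sum_le order.trans[OF degree_smult_le])
       (simp_all add: degree_prod_monic_linear card_minus assms(1))
  then have "q = Lg"
    using assms poly_Lg
    by (intro poly_eqI_degree[of "x ` I"]) (auto simp: card_image)
  have "coeff Lg (card I - 1) = (\<Sum>i\<in>I. poly q (x i) / D i)"
    unfolding Lg_def coeff_sum coeff_smult
  proof (rule sum.cong[OF refl])
    fix i assume "i \<in> I"
    then have "coeff (\<Prod>j\<in>I - {i}. [:- x j, 1:]) (card I - 1) = 1"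
      using coeff_prod_monic_linear[of x "I - {i}"] by (simp add: card_minus)
    then show "poly q (x i) / D i * coeff (\<Prod>j\<in>I - {i}. [:- x j, 1:]) (card I - 1)
        = poly q (x i) / D i" by simp
  qed
  with \<open>q = Lg\<close> show ?thesis by (simp add: D_def)
qed

section \<open>The Newton basis\<close>

definition wnode :: "real \<Rightarrow> (nat \<Rightarrow> real) \<Rightarrow> nat \<Rightarrow> real" where
  "wnode m \<alpha> i = \<alpha> i + real i * m"

lemma gfall_wnode: "gfall m \<alpha> n = (\<Prod>j<n. [:- wnode m \<alpha> j, 1:])"
  by (simp add: gfall_def wnode_def)

lemma gfall_0 [simp]: "gfall m \<alpha> 0 = 1"
  by (simp add: gfall_def)

lemma degree_gfall [simp]: "degree (gfall m \<alpha> n) = n"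
  by (simp add: gfall_wnode degree_prod_monic_linear)

lemma coeff_gfall_top [simp]: "coeff (gfall m \<alpha> n) n = 1"
  using coeff_prod_monic_linear[of "wnode m \<alpha>" "{..<n}"] by (simp add: gfall_wnode)

lemma coeff_gfall_above: "n < i \<Longrightarrow> coeff (gfall m \<alpha> n) i = 0"
  by (simp add: coeff_eq_0)

lemma gfall_Suc: "gfall m \<alpha> (Suc n) = [:- wnode m \<alpha> n, 1:] * gfall m \<alpha> n"
  by (simp add: gfall_wnode mult.commute)

lemma poly_gfall_wnode: "j < n \<Longrightarrow> poly (gfall m \<alpha> n) (wnode m \<alpha> j) = 0"
  unfolding gfall_wnode poly_prod by (rule prod_zero) (auto intro!: bexI[of _ j])

lemma newton_coeffs_eq_0:
  assumes "(\<Sum>l\<le>n. smult (c l) (gfall m \<alpha> l)) = 0"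
  shows "l \<le> n \<Longrightarrow> c l = 0"
  using assms
proof (induction n arbitrary: l)
  case 0
  then show ?case by simp
next
  case (Suc n)
  have "coeff (\<Sum>l\<le>Suc n. smult (c l) (gfall m \<alpha> l)) (Suc n) = c (Suc n)"
    by (simp add: coeff_sum coeff_gfall_above)
  with Suc.prems(2) have top: "c (Suc n) = 0" by simp
  with Suc.prems(2) have "(\<Sum>l\<le>n. smult (c l) (gfall m \<alpha> l)) = 0" by simp
  with Suc.IH top Suc.prems(1) show ?case by (cases "l = Suc n") auto
qed

lemma newton_coeffs_unique:
  assumes "\<forall>l>n. c l = 0" "\<forall>l>n. d l = 0"
    and "(\<Sum>l\<le>n. smult (c l) (gfall m \<alpha> l)) = (\<Sum>l\<le>n. smult (d l) (gfall m \<alpha> l))"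
  shows "c = d"
proof
  fix l
  have "(\<Sum>l\<le>n. smult (c l - d l) (gfall m \<alpha> l)) = 0"
    using assms(3) by (simp add: smult_diff_left sum_subtractf)
  from newton_coeffs_eq_0[OF this] assms(1,2) show "c l = d l"
    by (cases "l \<le> n") auto
qed

lemma newton_expansion_exists:
  fixes p :: "real poly"
  assumes "degree p \<le> n"
  shows "\<exists>c. (\<forall>l>n. c l = 0) \<and> p = (\<Sum>l\<le>n. smult (c l) (gfall m \<alpha> l))"
  using assms
proof (induction n arbitrary: p)
  case 0
  then obtain a where "p = [:a:]" by (metis degree_eq_zeroE le_zero_eq)
  then show ?case by (intro exI[of _ "\<lambda>l. if l = 0 then a else 0"]) simp
next
  case (Suc n)
  define q where "q = p - smult (coeff p (Suc n)) (gfall m \<alpha> (Suc n))"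
  have "degree q \<le> n"
  proof (rule degree_le, intro allI impI)
    fix i assume "n < i"
    with Suc.prems show "coeff q i = 0"
      by (cases "i = Suc n") (simp_all add: q_def coeff_gfall_above coeff_eq_0)
  qed
  from Suc.IH[OF this] obtain c where c: "\<forall>l>n. c l = 0"
    "q = (\<Sum>l\<le>n. smult (c l) (gfall m \<alpha> l))" by blast
  define c' where "c' = c(Suc n := coeff p (Suc n))"
  have "p = (\<Sum>l\<le>Suc n. smult (c' l) (gfall m \<alpha> l))"
    by (simp add: c(2)[symmetric] c'_def q_def)
  with c(1) show ?case by (intro exI[of _ c']) (auto simp: c'_def)
qed

lemma Wf_newton_expansion:
  "(\<forall>k>n. Wf m \<alpha> n k = 0) \<and> monom 1 n = (\<Sum>k\<le>n. smult (Wf m \<alpha> n k) (gfall m \<alpha> k))"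
proof -
  have "\<exists>!c. (\<forall>k>n. c k = 0) \<and> monom 1 n = (\<Sum>k\<le>n. smult (c k) (gfall m \<alpha> k))"
    using newton_expansion_exists[of "monom 1 n" n m \<alpha>] newton_coeffs_unique[of n _ _ m \<alpha>]
    by (auto simp: degree_monom_le)
  then show ?thesis unfolding Wf_def by (rule theI')
qed

lemma Wf_newton_expansion_upto:
  assumes "j \<le> n"
  shows "monom 1 j = (\<Sum>k\<le>n. smult (Wf m \<alpha> j k) (gfall m \<alpha> k))"
proof -
  have "(\<Sum>k\<le>n. smult (Wf m \<alpha> j k) (gfall m \<alpha> k)) = (\<Sum>k\<le>j. smult (Wf m \<alpha> j k) (gfall m \<alpha> k))"
    using assms Wf_newton_expansion[of j m \<alpha>] by (intro sum.mono_neutral_right) auto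
  with Wf_newton_expansion[of j m \<alpha>] show ?thesis by simp
qed

section \<open>Whitney-Lah numbers as Newton coordinates of the rising product\<close>

definition grise :: "real \<Rightarrow> (nat \<Rightarrow> real) \<Rightarrow> nat \<Rightarrow> real poly" where
  "grise m \<alpha> n = (\<Prod>i<n. [:wnode m \<alpha> i, 1:])"

lemma grise_0 [simp]: "grise m \<alpha> 0 = 1"
  by (simp add: grise_def)

lemma grise_Suc: "grise m \<alpha> (Suc n) = [:wnode m \<alpha> n, 1:] * grise m \<alpha> n"
  by (simp add: grise_def mult.commute)

lemma poly_grise: "poly (grise m \<alpha> n) x = (-1) ^ n * poly (gfall m \<alpha> n) (- x)"
  by (induction n) (simp_all add: grise_Suc gfall_Suc algebra_simps)

lemma grise_eq_signed_wf:
  "grise m \<alpha> n = (\<Sum>j\<le>n. smult ((-1) ^ (n - j) * wf m \<alpha> n j) (monom 1 j))"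
proof -
  have sign: "(-1) ^ (n - j) * x ^ j = (-1) ^ n * (- x) ^ j" if "j \<le> n" for j and x :: real
  proof -
    have split: "(-1) ^ n = (-1) ^ (n - j) * (-1::real) ^ j"
      using that by (simp flip: power_add)
    have "(-1) ^ n * (- x) ^ j = (-1) ^ (n - j) * ((-1) ^ j * (-1) ^ j) * x ^ j"
      by (simp only: split power_minus[of x j] mult.assoc)
    also have "(-1::real) ^ j * (-1) ^ j = 1"
      by (simp flip: power_mult_distrib)
    finally show ?thesis by simp
  qed
  have "poly (grise m \<alpha> n) x
      = poly (\<Sum>j\<le>n. smult ((-1) ^ (n - j) * wf m \<alpha> n j) (monom 1 j)) x" for x
  proof -
    have "poly (grise m \<alpha> n) x = (\<Sum>j\<le>n. (-1) ^ n * (wf m \<alpha> n j * (- x) ^ j))"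
      by (simp add: poly_grise poly_altdef[of "gfall m \<alpha> n"] wf_def sum_distrib_left)
    also have "\<dots> = (\<Sum>j\<le>n. (-1) ^ (n - j) * wf m \<alpha> n j * x ^ j)"
      by (intro sum.cong refl) (simp add: sign mult.left_commute)
    finally show ?thesis by (simp add: poly_sum poly_monom)
  qed
  then show ?thesis by (simp add: poly_eq_poly_eq_iff[symmetric] fun_eq_iff)
qed

lemma Lah_eq_0: "n < k \<Longrightarrow> Lah m \<alpha> n k = 0"
  by (simp add: Lah_def)

lemma Lah_eq_sum_atMost: "Lah m \<alpha> n k = (\<Sum>j\<le>n. (-1) ^ (n - j) * wf m \<alpha> n j * Wf m \<alpha> j k)"
  unfolding Lah_def
  using Wf_newton_expansion[of _ m \<alpha>]
  by (intro sum.mono_neutral_left) auto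

lemma smult_sum_right: "smult c (\<Sum>i\<in>S. f i) = (\<Sum>i\<in>S. smult c (f i))"
  by (induction S rule: infinite_finite_induct) (simp_all add: smult_add_right)

lemma Lah_newton_expansion: "(\<Sum>k\<le>n. smult (Lah m \<alpha> n k) (gfall m \<alpha> k)) = grise m \<alpha> n"
proof -
  let ?w = "\<lambda>j. (-1) ^ (n - j) * wf m \<alpha> n j"
  have "(\<Sum>k\<le>n. smult (Lah m \<alpha> n k) (gfall m \<alpha> k))
      = (\<Sum>k\<le>n. \<Sum>j\<le>n. smult (?w j) (smult (Wf m \<alpha> j k) (gfall m \<alpha> k)))"
    by (simp add: Lah_eq_sum_atMost smult_sum)
  also have "\<dots> = (\<Sum>j\<le>n. \<Sum>k\<le>n. smult (?w j) (smult (Wf m \<alpha> j k) (gfall m \<alpha> k)))"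
    by (rule sum.swap)
  also have "\<dots> = (\<Sum>j\<le>n. smult (?w j) (monom 1 j))"
    by (intro sum.cong refl)
       (simp only: atMost_iff smult_sum_right[symmetric] Wf_newton_expansion_upto[symmetric])
  finally show ?thesis by (simp add: grise_eq_signed_wf)
qed

lemma pCons_mult_gfall:
  "[:c, 1:] * gfall m \<alpha> l = gfall m \<alpha> (Suc l) + smult (c + wnode m \<alpha> l) (gfall m \<alpha> l)"
  by (simp add: gfall_Suc mult_pCons_left smult_add_left algebra_simps)

lemma Lah_Suc:
  "Lah m \<alpha> (Suc n) (Suc k) = Lah m \<alpha> n k + (wnode m \<alpha> n + wnode m \<alpha> (Suc k)) * Lah m \<alpha> n (Suc k)"
proof -
  let ?L = "Lah m \<alpha> n" and ?g = "gfall m \<alpha>" and ?a = "wnode m \<alpha>"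
  define d where "d l = (if l = 0 then 0 else ?L (l - 1)) + ?L l * (?a n + ?a l)" for l
  have "grise m \<alpha> (Suc n) = (\<Sum>l\<le>n. smult (?L l) ([:?a n, 1:] * ?g l))"
    unfolding grise_Suc Lah_newton_expansion[symmetric, of m \<alpha> n]
    by (simp only: sum_distrib_left mult_smult_right)
  also have "\<dots> = (\<Sum>l\<le>n. smult (?L l) (?g (Suc l))) + (\<Sum>l\<le>n. smult (?L l * (?a n + ?a l)) (?g l))"
    by (simp only: pCons_mult_gfall smult_add_right smult_smult sum.distrib)
  also have "(\<Sum>l\<le>n. smult (?L l) (?g (Suc l)))
      = (\<Sum>l\<le>Suc n. smult (if l = 0 then 0 else ?L (l - 1)) (?g l))"
    by (subst sum.atMost_Suc_shift) simp
  also have "(\<Sum>l\<le>n. smult (?L l * (?a n + ?a l)) (?g l))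
      = (\<Sum>l\<le>Suc n. smult (?L l * (?a n + ?a l)) (?g l))"
    by (simp add: Lah_eq_0)
  finally have "(\<Sum>l\<le>Suc n. smult (Lah m \<alpha> (Suc n) l) (?g l)) = (\<Sum>l\<le>Suc n. smult (d l) (?g l))"
    by (simp add: Lah_newton_expansion d_def smult_add_left sum.distrib)
  then have "Lah m \<alpha> (Suc n) = d"
    by (rule newton_coeffs_unique[rotated 2]) (auto simp: d_def Lah_eq_0)
  then show ?thesis by (simp add: d_def)
qed

lemma Lah_Suc_right_eq_sum:
  "Lah m \<alpha> n (Suc k)
    = (\<Sum>j=Suc k..n. Lah m \<alpha> (j - 1) k * (\<Prod>i=j..<n. wnode m \<alpha> i + wnode m \<alpha> (Suc k)))"
proof (induction n)
  case 0
  then show ?case by (simp add: Lah_eq_0)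
next
  case (Suc n)
  let ?g = "\<lambda>i. wnode m \<alpha> i + wnode m \<alpha> (Suc k)"
  show ?case
  proof (cases "k \<le> n")
    case True
    have "Lah m \<alpha> (Suc n) (Suc k)
        = Lah m \<alpha> n k + (\<Sum>j=Suc k..n. Lah m \<alpha> (j - 1) k * (\<Prod>i=j..<n. ?g i) * ?g n)"
      by (simp add: Lah_Suc Suc.IH sum_distrib_left algebra_simps)
    also have "\<dots> = Lah m \<alpha> n k + (\<Sum>j=Suc k..n. Lah m \<alpha> (j - 1) k * (\<Prod>i=j..<Suc n. ?g i))"
      by (intro arg_cong2[where f = "(+)"] sum.cong refl) (simp add: prod.atLeastLessThan_Suc)
    finally show ?thesis using True by (simp add: sum.cl_ivl_Suc)
  next
    case False
    then show ?thesis by (simp add: Lah_eq_0)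
  qed
qed

section \<open>The closed formula\<close>

lemma poly_grise_eq_truncation:
  assumes "j \<le> k"
  shows "poly (grise m \<alpha> n) (wnode m \<alpha> j) = poly (\<Sum>l\<le>k. smult (Lah m \<alpha> n l) (gfall m \<alpha> l)) (wnode m \<alpha> j)"
proof -
  have "poly (grise m \<alpha> n) (wnode m \<alpha> j) = (\<Sum>l\<le>n+k. Lah m \<alpha> n l * poly (gfall m \<alpha> l) (wnode m \<alpha> j))"
    unfolding Lah_newton_expansion[symmetric] poly_sum poly_smult
    by (intro sum.mono_neutral_left) (auto simp: Lah_eq_0)
  also have "\<dots> = (\<Sum>l\<le>k. Lah m \<alpha> n l * poly (gfall m \<alpha> l) (wnode m \<alpha> j))"
    using assms by (intro sum.mono_neutral_right) (auto simp: poly_gfall_wnode)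
  finally show ?thesis by (simp add: poly_sum)
qed

lemma Lah_eq_Lagrange_sum:
  assumes "inj_on (wnode m \<alpha>) {0..k}"
  shows "Lah m \<alpha> n k = (\<Sum>j=0..k. poly (grise m \<alpha> n) (wnode m \<alpha> j)
                                  / (\<Prod>i\<in>{0..k} - {j}. wnode m \<alpha> j - wnode m \<alpha> i))"
proof -
  define Q where "Q = (\<Sum>l\<le>k. smult (Lah m \<alpha> n l) (gfall m \<alpha> l))"
  have degree_Q: "degree Q \<le> k"
    unfolding Q_def by (intro degree_sum_le order.trans[OF degree_smult_le]) auto
  have "coeff Q k = (\<Sum>l\<in>{k}. Lah m \<alpha> n l * coeff (gfall m \<alpha> l) k)"
    unfolding Q_def coeff_sum coeff_smult
    by (intro sum.mono_neutral_right) (auto simp: coeff_gfall_above)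
  then have "Lah m \<alpha> n k = coeff Q (card {0..k} - 1)" by simp
  also have "\<dots> = (\<Sum>j=0..k. poly Q (wnode m \<alpha> j) / (\<Prod>i\<in>{0..k} - {j}. wnode m \<alpha> j - wnode m \<alpha> i))"
    using degree_Q assms by (intro coeff_top_eq_Lagrange_sum) auto
  finally show ?thesis by (simp add: poly_grise_eq_truncation Q_def)
qed

theorem mainTheorem11:
  fixes m :: real and \<alpha> :: "nat \<Rightarrow> real"
  shows "(\<forall>n k. inj_on (\<lambda>i. \<alpha> i + real i * m) {0..k} \<longrightarrow>
            Lah m \<alpha> n k =
              (\<Sum>j=0..k. (\<Prod>i<n. \<alpha> j + real j * m + \<alpha> i + real i * m) /
                         (\<Prod>i\<in>{0..k} - {j}. \<alpha> j + real j * m - \<alpha> i - real i * m)))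
       \<and> (\<forall>n k. 1 \<le> k \<and> k \<le> n \<longrightarrow>
            Lah m \<alpha> n k =
              (\<Sum>j=k..n. Lah m \<alpha> (j - 1) (k - 1) *
                         (\<Prod>i=j..<n. \<alpha> i + real i * m + \<alpha> k + real k * m)))"
proof (intro conjI allI impI)
  fix n k
  assume "inj_on (\<lambda>i. \<alpha> i + real i * m) {0..k}"
  then have "inj_on (wnode m \<alpha>) {0..k}" by (simp add: wnode_def[abs_def])
  then show "Lah m \<alpha> n k =
              (\<Sum>j=0..k. (\<Prod>i<n. \<alpha> j + real j * m + \<alpha> i + real i * m) /
                         (\<Prod>i\<in>{0..k} - {j}. \<alpha> j + real j * m - \<alpha> i - real i * m))"
    by (simp add: Lah_eq_Lagrange_sum grise_def poly_prod wnode_def algebra_simps)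
next
  fix n k :: nat
  assume "1 \<le> k \<and> k \<le> n"
  then obtain k' where "k = Suc k'" by (cases k) auto
  then show "Lah m \<alpha> n k =
              (\<Sum>j=k..n. Lah m \<alpha> (j - 1) (k - 1) *
                         (\<Prod>i=j..<n. \<alpha> i + real i * m + \<alpha> k + real k * m))"
    by (simp add: Lah_Suc_right_eq_sum wnode_def add.assoc)
qed

end
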